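(* Let $\mathcal{M}=\langle M,\circ,e\rangle$ be an mge monoid. Then $\mathcal{M}$ has left cancellation (for all $a,b,c\in M$, $ca=cb$ implies $a=b$), and for every $m\in M$ the pair $\langle e,e\rangle$ is an mge of $\langle m,m\rangle$.
   Context: In a monoid $\langle M,\circ,e\rangle$, a tuple $\langle m_1,\dots,m_n\rangle\in M^n$ is equalizable if there is $\langle x_1,\dots,x_n\rangle\in M^n$ (an equalizer) with $m_1x_1=\dots=m_nx_n$; an equalizer is a most general equalizer (mge) if every equalizer has the form $\langle x_1x,\dots,x_nx\rangle$ for some $x\in M$. An mge monoid is a monoid with right cancellation ($ac=bc\Rightarrow a=b$) in which every equalizable pair has an mge. *)

theory Defs
  imports Main
begin

text \<open>Monoids are modelled by the type class monoid_mult: carrier = the type,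
  operation = (*), neutral element e = 1. Only pairs (n = 2) are needed.\<close>

definition equalizer :: "'a::monoid_mult \<Rightarrow> 'a \<Rightarrow> 'a \<Rightarrow> 'a \<Rightarrow> bool" where
  "equalizer m1 m2 x1 x2 \<longleftrightarrow> m1 * x1 = m2 * x2"

definition equalizable :: "'a::monoid_mult \<Rightarrow> 'a \<Rightarrow> bool" where
  "equalizable m1 m2 \<longleftrightarrow> (\<exists>x1 x2. equalizer m1 m2 x1 x2)"

definition mge :: "'a::monoid_mult \<Rightarrow> 'a \<Rightarrow> 'a \<Rightarrow> 'a \<Rightarrow> bool" where
  "mge m1 m2 x1 x2 \<longleftrightarrow> equalizer m1 m2 x1 x2 \<and>
     (\<forall>y1 y2. equalizer m1 m2 y1 y2 \<longrightarrow> (\<exists>x. y1 = x1 * x \<and> y2 = x2 * x))"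

definition right_cancel :: "'a::monoid_mult itself \<Rightarrow> bool" where
  "right_cancel _ \<longleftrightarrow> (\<forall>a b c :: 'a. a * c = b * c \<longrightarrow> a = b)"

definition left_cancel :: "'a::monoid_mult itself \<Rightarrow> bool" where
  "left_cancel _ \<longleftrightarrow> (\<forall>a b c :: 'a. c * a = c * b \<longrightarrow> a = b)"

definition mge_monoid :: "'a::monoid_mult itself \<Rightarrow> bool" where
  "mge_monoid T \<longleftrightarrow> right_cancel T \<and>
     (\<forall>m1 m2 :: 'a. equalizable m1 m2 \<longrightarrow> (\<exists>x1 x2. mge m1 m2 x1 x2))"

end

theory Submission
  imports Defs
begin

text \<open>Let \<open>\<langle>x\<^sub>1, x\<^sub>2\<rangle>\<close> be an mge of \<open>\<langle>c, c\<rangle>\<close>. Since \<open>\<langle>1, 1\<rangle>\<close> is an equalizer,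
  \<open>1 = x\<^sub>1 x = x\<^sub>2 x\<close> for some \<open>x\<close>, so \<open>x\<^sub>1 = x\<^sub>2\<close> by right cancellation. Now \<open>c a = c b\<close>
  makes \<open>\<langle>a, b\<rangle>\<close> an equalizer of \<open>\<langle>c, c\<rangle>\<close>, hence \<open>a = x\<^sub>1 y = x\<^sub>2 y = b\<close>.
  With left cancellation every equalizer of \<open>\<langle>m, m\<rangle>\<close> has equal components,
  which is exactly the statement that \<open>\<langle>1, 1\<rangle>\<close> is an mge.\<close>

lemma equalizer_diagonal_iff: "equalizer c c a b \<longleftrightarrow> c * a = c * b"
  by (simp add: equalizer_def)

lemma equalizable_diagonal: "equalizable c c"
  unfolding equalizable_def equalizer_def by blast

lemma mge_diagonal_components_eq:
  fixes c :: "'a::monoid_mult"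
  assumes "right_cancel TYPE('a)" and "mge c c x1 x2"
  shows "x1 = x2"
proof -
  have "equalizer c c 1 1"
    by (simp add: equalizer_diagonal_iff)
  then obtain x where "1 = x1 * x" and "1 = x2 * x"
    using \<open>mge c c x1 x2\<close> unfolding mge_def by blast
  then show "x1 = x2"
    using \<open>right_cancel TYPE('a)\<close> unfolding right_cancel_def by metis
qed

lemma mge_monoid_left_cancel:
  assumes "mge_monoid TYPE('a::monoid_mult)"
  shows "left_cancel TYPE('a)"
  unfolding left_cancel_def
proof (intro allI impI)
  fix a b c :: 'a
  assume "c * a = c * b"
  obtain x1 x2 where mge: "mge c c x1 x2"
    using assms equalizable_diagonal unfolding mge_monoid_def by blast
  with assms have "x1 = x2"
    unfolding mge_monoid_def by (blast intro: mge_diagonal_components_eq)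
  moreover obtain y where "a = x1 * y" and "b = x2 * y"
    using mge \<open>c * a = c * b\<close> unfolding mge_def equalizer_diagonal_iff by blast
  ultimately show "a = b"
    by simp
qed

lemma left_cancel_mge_one_one:
  assumes "left_cancel TYPE('a::monoid_mult)"
  shows "mge (m :: 'a) m 1 1"
  using assms unfolding mge_def equalizer_diagonal_iff left_cancel_def by auto

theorem lemma2:
  assumes "mge_monoid TYPE('a::monoid_mult)"
  shows "left_cancel TYPE('a) \<and> (\<forall>m :: 'a. mge m m 1 1)"
  using mge_monoid_left_cancel[OF assms] left_cancel_mge_one_one by blast

end
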